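(* Let $T_i$ and $T_j$ be indecomposable summands of a maximal rigid object $T$ of $\mathcal{C}_n$. The following are equivalent: (a) there exists a nonzero $\mathcal{T}$-map $T_i\to T_j$; (b) either $T_j$ lies on the ray $\mathbf{R}_{T_i}$, or $T_i$ lies on the coray $\mathbf{C}_{T_j}$.
   Context: Let $k$ be algebraically closed, $n\ge2$, $\mathcal{T}_n$ the tube of rank $n$ (finite-dimensional nilpotent representations of the cyclically oriented $\tilde A_{n-1}$-quiver; AR-translation $\tau$), $\mathcal{C}_n=D^b(\mathcal{T}_n)/\tau^{-1}[1]$ the cluster tube, with indecomposables identified with those of $\mathcal{T}_n$. Indecomposables have coordinates $(a,b)$, $a\in\mathbb{Z}/n$, $b\ge1$ the quasilength, with $\tau(a,b)=(a-1,b)$ and irreducible maps $(a,b)\to(a,b+1)$ and $(a,b)\to(a+1,b-1)$. The ray $\mathbf{R}_{(a,i)}$ is $\{(a,i+j):j\ge0\}$; the coray $\mathbf{C}_{(a,i)}$ is $\{(a-j,i+j):j\ge0\}$. For indecomposables $X,Y$, $\operatorname{Hom}_{\mathcal{C}_n}(X,Y)=\operatorname{Hom}_{\mathcal{T}_n}(X,Y)\oplus\operatorname{Hom}_{D^b}(X,\tau^{-1}Y[1])$; elements of the first summand are called $\mathcal{T}$-maps. $T$ is maximal rigid if $\operatorname{Ext}^1_{\mathcal{C}_n}(T,T)=0$ and $\operatorname{Ext}^1(T\oplus X,T\oplus X)=0$ implies $X\in\operatorname{add}T$. *)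

theory Defs
  imports Main
begin

text \<open>An indecomposable is a pair (a,b) with a an integer representative of Z/n
  (normalised to 0 <= a < n) and b >= 1 the quasilength.
  The indecomposable (a,b) of the tube is the uniserial module with
  quasi-composition factors S_a (quasi-socle), S_(a+1), ..., S_(a+b-1) (quasi-top),
  so that the irreducible maps (a,b) -> (a,b+1) are monos, (a,b) -> (a+1,b-1) are epis,
  and tau(a,b) = (a-1,b).\<close>

type_synonym ind = "int \<times> nat"

definition valid_ind :: "nat \<Rightarrow> ind \<Rightarrow> bool" where
  "valid_ind n X \<longleftrightarrow> 0 \<le> fst X \<and> fst X < int n \<and> 1 \<le> snd X"

definition tau :: "nat \<Rightarrow> ind \<Rightarrow> ind" where
  "tau n X = ((fst X - 1) mod int n, snd X)"

text \<open>Dimension of Hom in the tube T_n between uniserials X=(a,b) and Y=(c,d):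
  every nonzero map has image which is a quotient of X (factors a+k..a+b-1) and a
  submodule of Y (factors c..c+l-1); such images are in bijection with the
  k in [0,b) with a+k = c (mod n) and b-k <= d, and each contributes one dimension.\<close>

definition hom_T_dim :: "nat \<Rightarrow> ind \<Rightarrow> ind \<Rightarrow> nat" where
  "hom_T_dim n X Y =
     card {k. k < snd X \<and> (fst X + int k) mod int n = fst Y mod int n \<and> snd X - k \<le> snd Y}"

definition nonzero_T_map :: "nat \<Rightarrow> ind \<Rightarrow> ind \<Rightarrow> bool" where
  "nonzero_T_map n X Y \<longleftrightarrow> hom_T_dim n X Y \<noteq> 0"

text \<open>dim Ext^1 in the cluster tube:
  Ext^1_C(X,Y) = Ext^1_T(X,Y) + D Ext^1_T(Y,X) = D Hom_T(Y, tau X) + D Hom_T(X, tau Y).\<close>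
definition ext_C_dim :: "nat \<Rightarrow> ind \<Rightarrow> ind \<Rightarrow> nat" where
  "ext_C_dim n X Y = hom_T_dim n Y (tau n X) + hom_T_dim n X (tau n Y)"

text \<open>A basic object of the cluster tube is represented by its (finite) set of
  indecomposable summands; Ext^1 is additive, so rigidity is checked on pairs.\<close>
definition rigid :: "nat \<Rightarrow> ind set \<Rightarrow> bool" where
  "rigid n S \<longleftrightarrow> finite S \<and> (\<forall>X\<in>S. valid_ind n X) \<and>
     (\<forall>X\<in>S. \<forall>Y\<in>S. ext_C_dim n X Y = 0)"

definition maximal_rigid :: "nat \<Rightarrow> ind set \<Rightarrow> bool" where
  "maximal_rigid n S \<longleftrightarrow> rigid n S \<and>
     (\<forall>X. valid_ind n X \<longrightarrow> rigid n (insert X S) \<longrightarrow> X \<in> S)"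

definition ray :: "nat \<Rightarrow> ind \<Rightarrow> ind set" where
  "ray n X = {((fst X) mod int n, snd X + j) | j. True}"

definition coray :: "nat \<Rightarrow> ind \<Rightarrow> ind set" where
  "coray n X = {((fst X - int j) mod int n, snd X + j) | j. True}"

end

theory Submission
  imports Defs
begin

text \<open>A nonzero T-map X \<rightarrow> Y corresponds to a common quasi-factor k of X and Y.
  For k = 0 the map is mono, so Y lies on the ray of X; if the image is all of Y, then X lies
  on the coray of Y. Otherwise the image is a proper quotient of X and a proper submodule of Y,
  and shortening it by one factor gives a nonzero map X \<rightarrow> \<tau>Y, i.e. a nonzero extension of Y by X,
  which rigidity forbids.\<close>

lemma hom_T_dim_neq_0_iff:
  "hom_T_dim n X Y \<noteq> 0 \<longleftrightarrow>
     (\<exists>k < snd X. (fst X + int k) mod int n = fst Y mod int n \<and> snd X - k \<le> snd Y)"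
proof -
  have "finite {k. k < snd X \<and> (fst X + int k) mod int n = fst Y mod int n \<and> snd X - k \<le> snd Y}"
    by (rule finite_subset[of _ "{..<snd X}"]) auto
  then show ?thesis
    unfolding hom_T_dim_def by auto
qed

lemma nonzero_T_map_if_in_ray:
  assumes "0 < snd X" and "Y \<in> ray n X"
  shows "nonzero_T_map n X Y"
  using assms unfolding nonzero_T_map_def hom_T_dim_neq_0_iff ray_def
  by (auto intro!: exI[of _ 0])

lemma nonzero_T_map_if_in_coray:
  assumes "0 < snd Y" and "X \<in> coray n Y"
  shows "nonzero_T_map n X Y"
proof -
  obtain j where X: "X = ((fst Y - int j) mod int n, snd Y + j)"
    using assms(2) unfolding coray_def by auto
  have "(fst X + int j) mod int n = fst Y mod int n"
    unfolding X by (simp add: mod_add_left_eq)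
  with assms(1) show ?thesis
    unfolding nonzero_T_map_def hom_T_dim_neq_0_iff X by (auto intro!: exI[of _ j])
qed

lemma nonzero_T_map_cases:
  assumes "valid_ind n X" and "valid_ind n Y" and "nonzero_T_map n X Y"
  shows "Y \<in> ray n X \<or> X \<in> coray n Y \<or> nonzero_T_map n X (tau n Y)"
proof -
  obtain a b c d where X: "X = (a, b)" and Y: "Y = (c, d)" by force
  have a: "a mod int n = a" and c: "c mod int n = c"
    using assms(1,2) unfolding X Y valid_ind_def by simp_all
  obtain k where k: "k < b" "(a + int k) mod int n = c" "b - k \<le> d"
    using assms(3) c unfolding nonzero_T_map_def hom_T_dim_neq_0_iff X Y by auto
  consider "k = 0" | "k \<noteq> 0" "b - k = d" | "k \<noteq> 0" "b - k < d"
    using k(3) by linarith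
  then show ?thesis
  proof cases
    case 1
    then have "Y = (a mod int n, b + (d - b))"
      using k a unfolding Y by auto
    then show ?thesis unfolding ray_def X by auto
  next
    case 2
    have "(c - int k) mod int n = a"
      using k(2) a by (metis add_diff_cancel_right' mod_diff_left_eq)
    then have "X = ((c - int k) mod int n, d + k)"
      using 2 k(1) unfolding X by auto
    then show ?thesis unfolding coray_def Y by auto
  next
    case 3
    have "(a + int (k - 1)) mod int n = ((a + int k) mod int n - 1) mod int n"
      using 3 by (simp add: of_nat_diff algebra_simps mod_diff_left_eq)
    then have "(a + int (k - 1)) mod int n = (c - 1) mod int n mod int n"
      using k(2) by simp
    moreover have "k - 1 < b" and "b - (k - 1) \<le> d"
      using k(1) 3 by auto
    ultimately have "nonzero_T_map n X (tau n Y)"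
      unfolding nonzero_T_map_def hom_T_dim_neq_0_iff X Y tau_def by auto
    then show ?thesis by blast
  qed
qed

theorem lemma2p7:
  fixes n :: nat and T :: "ind set" and Ti Tj :: ind
  assumes "n \<ge> 2"
    and "maximal_rigid n T"
    and "Ti \<in> T" and "Tj \<in> T"
  shows "nonzero_T_map n Ti Tj \<longleftrightarrow> (Tj \<in> ray n Ti \<or> Ti \<in> coray n Tj)"
proof -
  have rigid: "rigid n T"
    using assms(2) unfolding maximal_rigid_def by blast
  then have valid: "valid_ind n Ti" "valid_ind n Tj"
    using assms(3,4) unfolding rigid_def by auto
  have "\<not> nonzero_T_map n Ti (tau n Tj)"
    using rigid assms(3,4) unfolding rigid_def ext_C_dim_def nonzero_T_map_def by auto
  moreover have "0 < snd Ti" "0 < snd Tj"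
    using valid unfolding valid_ind_def by auto
  ultimately show ?thesis
    using valid nonzero_T_map_cases nonzero_T_map_if_in_ray nonzero_T_map_if_in_coray by blast
qed

end
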